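(* Let $G$ be a $6$-regular graph, $\mathcal S$ a canonical path partition of $G$, and $P$ a path component with end-vertices $o_1,o_2$. Let $x_1,x_2\in V_2$ be path neighbors on $P$, with $x_1$ immediately preceding $x_2$ when $P$ is traversed from $o_1$ to $o_2$. If $x_1$ goes to $o_2$, then $o_2$ is the only vertex that $x_2$ goes to.
   Context: All graphs are finite, simple and undirected. A path partition of $G=(V,E)$ is a set of vertex-disjoint paths (single vertices allowed) covering $V$; its members are components. A component with $t\ge3$ vertices is a cycle component if the subgraph induced on its vertex set has a spanning cycle; a one-vertex component is an isolated vertex; every other component is a path component. A path partition is canonical if (1) it has the minimum number of components among all path partitions of $G$; (2) among those, it has the maximum number of cycle components; (3) it has no isolated vertices. Given a canonical path partition $\mathcal S$ of $G$: two vertices are path neighbors if they are consecutive on a path component. An edge of $G$ is a free edge unless it joins two path neighbors or has both endpoints in the same cycle component. $V_1$ is the set of end-vertices of path components together with all vertices of cycle components. $V_2$ is the set of vertices not in $V_1$ that are joined by a free edge to a vertex of $V_1$. A balanced edge is a free edge with one endpoint in $V_1$ and the other in $V_2$; for $x\in V_2$, $y\in V_1$ we say $x$ goes to $y$ if $xy$ is a balanced edge. *)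

theory Defs
  imports Main
begin

definition graph :: "'a set \<Rightarrow> ('a \<Rightarrow> 'a \<Rightarrow> bool) \<Rightarrow> bool" where
  "graph V E \<longleftrightarrow> finite V \<and> (\<forall>u v. E u v \<longrightarrow> u \<in> V \<and> v \<in> V)
     \<and> (\<forall>u v. E u v \<longrightarrow> E v u) \<and> (\<forall>u. \<not> E u u)"

definition regular :: "nat \<Rightarrow> 'a set \<Rightarrow> ('a \<Rightarrow> 'a \<Rightarrow> bool) \<Rightarrow> bool" where
  "regular k V E \<longleftrightarrow> graph V E \<and> (\<forall>v\<in>V. card {u\<in>V. E v u} = k)"

definition is_path :: "'a set \<Rightarrow> ('a \<Rightarrow> 'a \<Rightarrow> bool) \<Rightarrow> 'a list \<Rightarrow> bool" where
  "is_path V E p \<longleftrightarrow> p \<noteq> [] \<and> distinct p \<and> set p \<subseteq> V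
     \<and> (\<forall>i. Suc i < length p \<longrightarrow> E (p ! i) (p ! Suc i))"

definition path_partition :: "'a set \<Rightarrow> ('a \<Rightarrow> 'a \<Rightarrow> bool) \<Rightarrow> 'a list set \<Rightarrow> bool" where
  "path_partition V E S \<longleftrightarrow> (\<forall>p\<in>S. is_path V E p)
     \<and> (\<forall>p\<in>S. \<forall>q\<in>S. p \<noteq> q \<longrightarrow> set p \<inter> set q = {})
     \<and> (\<Union>p\<in>S. set p) = V"

definition has_spanning_cycle :: "('a \<Rightarrow> 'a \<Rightarrow> bool) \<Rightarrow> 'a set \<Rightarrow> bool" where
  "has_spanning_cycle E W \<longleftrightarrow> (\<exists>c. distinct c \<and> set c = W \<and> length c \<ge> 3
     \<and> (\<forall>i. Suc i < length c \<longrightarrow> E (c ! i) (c ! Suc i))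
     \<and> E (last c) (hd c))"

definition cycle_component :: "('a \<Rightarrow> 'a \<Rightarrow> bool) \<Rightarrow> 'a list \<Rightarrow> bool" where
  "cycle_component E p \<longleftrightarrow> length p \<ge> 3 \<and> has_spanning_cycle E (set p)"

definition isolated_component :: "'a list \<Rightarrow> bool" where
  "isolated_component p \<longleftrightarrow> length p = 1"

definition path_component :: "('a \<Rightarrow> 'a \<Rightarrow> bool) \<Rightarrow> 'a list \<Rightarrow> bool" where
  "path_component E p \<longleftrightarrow> \<not> cycle_component E p \<and> \<not> isolated_component p"

definition num_cycle_components :: "('a \<Rightarrow> 'a \<Rightarrow> bool) \<Rightarrow> 'a list set \<Rightarrow> nat" where
  "num_cycle_components E S = card {p\<in>S. cycle_component E p}"

definition canonical :: "'a set \<Rightarrow> ('a \<Rightarrow> 'a \<Rightarrow> bool) \<Rightarrow> 'a list set \<Rightarrow> bool" where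
  "canonical V E S \<longleftrightarrow> path_partition V E S
     \<and> (\<forall>T. path_partition V E T \<longrightarrow> card S \<le> card T)
     \<and> (\<forall>T. path_partition V E T \<and> card T = card S
            \<longrightarrow> num_cycle_components E T \<le> num_cycle_components E S)
     \<and> (\<forall>p\<in>S. \<not> isolated_component p)"

definition path_neighbors :: "('a \<Rightarrow> 'a \<Rightarrow> bool) \<Rightarrow> 'a list set \<Rightarrow> 'a \<Rightarrow> 'a \<Rightarrow> bool" where
  "path_neighbors E S u v \<longleftrightarrow> (\<exists>p\<in>S. path_component E p \<and>
     (\<exists>i. Suc i < length p \<and> ((p ! i = u \<and> p ! Suc i = v) \<or> (p ! i = v \<and> p ! Suc i = u))))"

definition free_edge :: "('a \<Rightarrow> 'a \<Rightarrow> bool) \<Rightarrow> 'a list set \<Rightarrow> 'a \<Rightarrow> 'a \<Rightarrow> bool" where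
  "free_edge E S u v \<longleftrightarrow> E u v \<and> \<not> path_neighbors E S u v
     \<and> \<not> (\<exists>p\<in>S. cycle_component E p \<and> u \<in> set p \<and> v \<in> set p)"

definition V1 :: "('a \<Rightarrow> 'a \<Rightarrow> bool) \<Rightarrow> 'a list set \<Rightarrow> 'a set" where
  "V1 E S = {v. \<exists>p\<in>S. (path_component E p \<and> (v = hd p \<or> v = last p))
                      \<or> (cycle_component E p \<and> v \<in> set p)}"

definition V2 :: "'a set \<Rightarrow> ('a \<Rightarrow> 'a \<Rightarrow> bool) \<Rightarrow> 'a list set \<Rightarrow> 'a set" where
  "V2 V E S = {x\<in>V. x \<notin> V1 E S \<and> (\<exists>y\<in>V1 E S. free_edge E S x y)}"

definition goes_to :: "'a set \<Rightarrow> ('a \<Rightarrow> 'a \<Rightarrow> bool) \<Rightarrow> 'a list set \<Rightarrow> 'a \<Rightarrow> 'a \<Rightarrow> bool" where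
  "goes_to V E S x y \<longleftrightarrow> x \<in> V2 V E S \<and> y \<in> V1 E S \<and> free_edge E S x y"

end

theory Submission
  imports Defs
begin

text \<open>Let \<open>x\<^sub>1 = Q ! i\<close> and \<open>x\<^sub>2 = Q ! Suc i\<close>. Since \<open>x\<^sub>1\<close> is adjacent to the end \<open>o\<^sub>2\<close>
of \<open>Q\<close>, the Posa rotation \<open>Q[..x\<^sub>1] o\<^sub>2 \<dots> x\<^sub>2\<close> is another path on the vertex set of \<open>P\<close>,
starting at \<open>o\<^sub>1\<close> and ending at \<open>x\<^sub>2\<close>. If \<open>x\<^sub>2\<close> were adjacent to a vertex \<open>y \<in> V\<^sub>1\<close> other
than \<open>o\<^sub>2\<close>, then either \<open>y = o\<^sub>1\<close> and this path closes to a spanning cycle of \<open>P\<close>, so \<open>P\<close>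
would be a cycle component, or \<open>y\<close> lies in another component, which \<open>y\<close> as a vertex of
\<open>V\<^sub>1\<close> lets us traverse by a path starting at \<open>y\<close>; appending it merges two components,
contradicting the minimality of \<open>\<S>\<close>.\<close>

lemma is_path_iff_successively:
  "is_path V E p \<longleftrightarrow> p \<noteq> [] \<and> distinct p \<and> set p \<subseteq> V \<and> successively E p"
  unfolding is_path_def successively_conv_nth by blast

lemma successively_rev_symmetric:
  assumes "\<And>u v. E u v \<Longrightarrow> E v u"
  shows "successively E (rev xs) \<longleftrightarrow> successively E xs"
  by (simp, rule successively_cong) (auto intro: assms)

lemma is_path_rev:
  assumes "\<And>u v. E u v \<Longrightarrow> E v u"
  shows "is_path V E (rev p) \<longleftrightarrow> is_path V E p"
  using successively_rev_symmetric[OF assms, where xs = p]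
  by (simp add: is_path_iff_successively del: successively_rev)

lemma finite_path_partition:
  assumes "path_partition V E S" "finite V"
  shows "finite S"
proof -
  have "S \<subseteq> {xs. set xs \<subseteq> V \<and> length xs \<le> card V}"
  proof
    fix p assume "p \<in> S"
    then have "distinct p" "set p \<subseteq> V"
      using assms(1) unfolding path_partition_def is_path_def by auto
    moreover have "length p \<le> card V"
      using \<open>distinct p\<close> \<open>set p \<subseteq> V\<close> card_mono[OF assms(2)] distinct_card by metis
    ultimately show "p \<in> {xs. set xs \<subseteq> V \<and> length xs \<le> card V}" by simp
  qed
  then show ?thesis using finite_subset finite_lists_length_le[OF assms(2)] by blast
qed

lemma path_partition_merge:
  assumes pp: "path_partition V E S" and fin: "finite S"
    and P: "P \<in> S" and R: "R \<in> S" and "P \<noteq> R"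
    and c: "is_path V E c" "set c = set P"
    and r: "is_path V E r" "set r = set R"
    and joined: "E (last c) (hd r)"
  shows "\<exists>T. path_partition V E T \<and> card T < card S"
proof -
  define T where "T = insert (c @ r) (S - {P, R})"
  have disjoint: "\<And>p q. p \<in> S \<Longrightarrow> q \<in> S \<Longrightarrow> p \<noteq> q \<Longrightarrow> set p \<inter> set q = {}"
    using pp unfolding path_partition_def by blast
  have set_cr: "set (c @ r) = set P \<union> set R" using c(2) r(2) by auto
  have rest_disjoint: "\<And>q. q \<in> S - {P, R} \<Longrightarrow> set q \<inter> set (c @ r) = {}"
    using disjoint[of _ P] disjoint[of _ R] P R set_cr by blast
  have path: "is_path V E (c @ r)"
    using c r joined disjoint[OF P R \<open>P \<noteq> R\<close>]
    by (auto simp: is_path_iff_successively successively_append_iff)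
  have new: "c @ r \<notin> S - {P, R}"
    using rest_disjoint c(1) set_cr by (fastforce simp: is_path_def)
  have "path_partition V E T"
    unfolding path_partition_def
  proof (intro conjI)
    show "\<forall>p\<in>T. is_path V E p"
      using pp path unfolding T_def path_partition_def by auto
    show "\<forall>p\<in>T. \<forall>q\<in>T. p \<noteq> q \<longrightarrow> set p \<inter> set q = {}"
      using disjoint rest_disjoint unfolding T_def by blast
    have "(\<Union>p\<in>T. set p) = set P \<union> set R \<union> (\<Union>p\<in>S - {P, R}. set p)"
      unfolding T_def using set_cr by auto
    also have "\<dots> = (\<Union>p\<in>S. set p)" using P R by blast
    finally show "(\<Union>p\<in>T. set p) = V" using pp unfolding path_partition_def by simp
  qed
  moreover have "card T < card S"
  proof -
    have "card {P, R} = 2" "{P, R} \<subseteq> S" using P R \<open>P \<noteq> R\<close> by auto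
    then have "card (S - {P, R}) = card S - 2" "card S \<ge> 2"
      using card_Diff_subset[of "{P, R}" S] card_mono[OF fin, of "{P, R}"] fin by auto
    then show ?thesis unfolding T_def using new fin by simp
  qed
  ultimately show ?thesis by blast
qed

lemma spanning_cycle_path_from:
  assumes "has_spanning_cycle E W" "y \<in> W"
  obtains r where "distinct r" "set r = W" "successively E r" "hd r = y"
proof -
  obtain cy where cy: "distinct cy" "set cy = W" "successively E cy" "E (last cy) (hd cy)"
    using assms(1) unfolding has_spanning_cycle_def successively_conv_nth by blast
  obtain k where k: "k < length cy" "cy ! k = y" using assms(2) cy(2) by (metis in_set_conv_nth)
  have "successively E (drop k cy)" "successively E (take k cy)"
    using cy(3) by (metis append_take_drop_id successively_append_iff)+
  moreover have "take k cy = [] \<or> E (last (drop k cy)) (hd (take k cy))"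
    using k cy(4) by (cases k; cases cy) (auto simp: last_drop split: if_splits)
  ultimately have "successively E (rotate k cy)"
    using k by (simp add: rotate_drop_take successively_append_iff)
  moreover have "hd (rotate k cy) = y"
    using k by (simp add: rotate_drop_take hd_drop_conv_nth)
  ultimately show ?thesis using that[of "rotate k cy"] cy(1,2) by simp
qed

lemma V1_path_from:
  assumes pp: "path_partition V E S" and sym: "\<And>u v. E u v \<Longrightarrow> E v u"
    and "y \<in> V1 E S"
  obtains p r where "p \<in> S" "is_path V E r" "set r = set p" "hd r = y"
    "path_component E p \<Longrightarrow> y = hd p \<or> y = last p"
proof -
  obtain p where p: "p \<in> S"
    "(path_component E p \<and> (y = hd p \<or> y = last p)) \<or> (cycle_component E p \<and> y \<in> set p)"
    using assms(3) unfolding V1_def by auto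
  have p_path: "is_path V E p" using pp p(1) unfolding path_partition_def by auto
  consider "y = hd p" | "y = last p" | "cycle_component E p" "y \<in> set p"
    using p(2) by blast
  then show ?thesis
  proof cases
    case 1
    then show ?thesis using that p p_path by auto
  next
    case 2
    then have "hd (rev p) = y" "is_path V E (rev p)"
      using p_path by (auto simp: hd_rev is_path_rev[OF sym])
    then show ?thesis using that p 2 by auto
  next
    case 3
    then obtain r where "distinct r" "set r = set p" "successively E r" "hd r = y"
      using spanning_cycle_path_from unfolding cycle_component_def by metis
    moreover have "set p \<subseteq> V" using p_path unfolding is_path_def by auto
    moreover have "r \<noteq> []" using \<open>set r = set p\<close> 3(2) by auto
    ultimately show ?thesis
      using that[of p r] p(1) 3 by (auto simp: is_path_iff_successively path_component_def)
  qed
qed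

lemma canonical_V1_neighbour_of_end:
  assumes can: "canonical V E S" and G: "graph V E"
    and P: "P \<in> S" "path_component E P" "length P \<ge> 3"
    and c: "is_path V E c" "set c = set P"
    and y: "y \<in> V1 E S" "E (last c) y"
  shows "y \<noteq> hd c \<and> (y = hd P \<or> y = last P)"
proof -
  have sym: "\<And>u v. E u v \<Longrightarrow> E v u" and "finite V" using G unfolding graph_def by auto
  have pp: "path_partition V E S" and minimal: "\<And>T. path_partition V E T \<Longrightarrow> card S \<le> card T"
    using can unfolding canonical_def by auto
  obtain p r where p: "p \<in> S" "is_path V E r" "set r = set p" "hd r = y"
    "path_component E p \<Longrightarrow> y = hd p \<or> y = last p"
    using V1_path_from[OF pp sym y(1)] by metis
  have "p = P"
    using path_partition_merge[OF pp finite_path_partition[OF pp \<open>finite V\<close>] P(1) p(1) _ c p(2,3)]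
      y(2) p(4) minimal by (metis leD)
  moreover have "y \<noteq> hd c"
  proof
    assume "y = hd c"
    have "length c = length P"
      using c P(1) pp distinct_card
      by (metis is_path_def path_partition_def)
    then have "has_spanning_cycle E (set P)"
      using c y(2) P(3) \<open>y = hd c\<close>
      unfolding has_spanning_cycle_def is_path_def by auto
    then show False using P(2,3) unfolding path_component_def cycle_component_def by auto
  qed
  ultimately show ?thesis using p(5) P(2) by auto
qed

definition posa_rotation :: "'a list \<Rightarrow> nat \<Rightarrow> 'a list" where
  "posa_rotation Q i = take (Suc i) Q @ rev (drop (Suc i) Q)"

lemma posa_rotation_simps:
  assumes "Suc i < length Q"
  shows "set (posa_rotation Q i) = set Q" "hd (posa_rotation Q i) = hd Q"
    "last (posa_rotation Q i) = Q ! Suc i"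
proof -
  show "set (posa_rotation Q i) = set Q"
    unfolding posa_rotation_def by (metis append_take_drop_id set_append set_rev)
  show "hd (posa_rotation Q i) = hd Q"
    unfolding posa_rotation_def using assms by (cases Q) auto
  show "last (posa_rotation Q i) = Q ! Suc i"
    unfolding posa_rotation_def using assms by (simp add: last_rev hd_drop_conv_nth)
qed

lemma is_path_posa_rotation:
  assumes sym: "\<And>u v. E u v \<Longrightarrow> E v u"
    and Q: "is_path V E Q" "Suc i < length Q" and joined: "E (Q ! i) (last Q)"
  shows "is_path V E (posa_rotation Q i)"
proof -
  have "successively E (take (Suc i) Q)" "successively E (drop (Suc i) Q)"
    using Q(1) unfolding is_path_iff_successively
    by (metis append_take_drop_id successively_append_iff)+
  then have "successively E (take (Suc i) Q)" "successively E (rev (drop (Suc i) Q))"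
    by (simp_all only: successively_rev_symmetric[OF sym])
  moreover have "last (take (Suc i) Q) = Q ! i" "hd (rev (drop (Suc i) Q)) = last Q"
    using Q(2) by (auto simp: take_Suc_conv_app_nth hd_rev)
  ultimately have "successively E (posa_rotation Q i)"
    using joined unfolding posa_rotation_def successively_append_iff by auto
  moreover have "distinct (posa_rotation Q i)"
    using Q(1) unfolding is_path_def posa_rotation_def
    by (metis append_take_drop_id distinct_append distinct_rev set_rev)
  ultimately show ?thesis
    using Q posa_rotation_simps(1)[OF Q(2)]
    by (auto simp: is_path_iff_successively posa_rotation_def)
qed

theorem mainTheorem6:
  fixes V :: "'a set" and E :: "'a \<Rightarrow> 'a \<Rightarrow> bool" and S :: "'a list set"
    and P Q :: "'a list" and i :: nat
  assumes "regular 6 V E"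
    and "canonical V E S"
    and "P \<in> S" and "path_component E P"
    and "Q = P \<or> Q = rev P"
    and "Suc i < length Q"
    and "Q ! i \<in> V2 V E S" and "Q ! Suc i \<in> V2 V E S"
    and "goes_to V E S (Q ! i) (last Q)"
  shows "{y. goes_to V E S (Q ! Suc i) y} = {last Q}"
proof -
  have G: "graph V E" using assms(1) unfolding regular_def by auto
  then have sym: "\<And>u v. E u v \<Longrightarrow> E v u" unfolding graph_def by auto
  have "is_path V E P" using assms(2,3) unfolding canonical_def path_partition_def by auto
  moreover from this have "P \<noteq> []" unfolding is_path_def by simp
  ultimately have Q: "is_path V E Q" "set Q = set P" "length Q = length P"
      "{hd Q, last Q} = {hd P, last P}"
    using assms(5) by (auto simp: is_path_rev[OF sym] hd_rev last_rev)
  have "last Q \<in> V1 E S" using Q(4) assms(3,4) unfolding V1_def by blast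
  then have long: "Suc (Suc i) < length Q"
  proof (rule contrapos_pp)
    assume "\<not> Suc (Suc i) < length Q"
    then have "Suc i = length Q - 1" "Q \<noteq> []" using assms(6) by auto
    then have "Q ! Suc i = last Q" by (simp add: last_conv_nth)
    then show "last Q \<notin> V1 E S" using assms(8) unfolding V2_def by auto
  qed
  have joined: "E (Q ! i) (last Q)" using assms(9) unfolding goes_to_def free_edge_def by auto
  have only_last: "y = last Q" if "y \<in> V1 E S" "E (Q ! Suc i) y" for y
  proof -
    have "y \<noteq> hd Q \<and> (y = hd P \<or> y = last P)"
      using canonical_V1_neighbour_of_end[OF assms(2) G assms(3,4) _
          is_path_posa_rotation[OF sym Q(1) assms(6) joined]]
        posa_rotation_simps[OF assms(6)] Q(2,3) long that by auto
    then show ?thesis using Q(4) by (auto simp: doubleton_eq_iff)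
  qed
  show ?thesis
    using assms(8) only_last unfolding V2_def goes_to_def free_edge_def by auto
qed

end
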